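(* Let $k,p>0$ be integers and let $U$ be a function assignment for $\mathbb{N}^k$. Then there exist a finite set $A\subseteq\mathbb{N}^k$ and a set $E\subseteq\mathbb{N}$ with $|E|=p$ and $E^k\subseteq A$ such that $U(A)$ has at most $k^k\,p$ regressive values on $E^k$.
   Context: $\mathbb{N}=\{0,1,2,\dots\}$. For $x\in\mathbb{N}^k$, $\min(x)$ is the minimum coordinate and $|x|$ the maximum coordinate of $x$. A function assignment for a set $S$ is a map $U$ assigning to each finite subset $A\subseteq S$ a function $U(A):A\to A$. For $B\subseteq\mathbb{N}^k$ and a function $F$ defined on $B$ with values in $\mathbb{N}^k$, $y$ is a regressive value of $F$ on $B$ iff there exists $x\in B$ with $F(x)=y$ and $|y|<\min(x)$. *)

theory Defs
  imports Main
begin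

definition Nk :: "nat \<Rightarrow> nat list set" where
  "Nk k = {x. length x = k}"

definition cube :: "nat set \<Rightarrow> nat \<Rightarrow> nat list set" where
  "cube E k = {x. length x = k \<and> set x \<subseteq> E}"

definition minc :: "nat list \<Rightarrow> nat" where
  "minc x = Min (set x)"

definition maxc :: "nat list \<Rightarrow> nat" where
  "maxc x = Max (set x)"

text \<open>U assigns to each finite subset A of S a function A -> A
  (values outside A are irrelevant).\<close>
definition function_assignment :: "'a set \<Rightarrow> ('a set \<Rightarrow> 'a \<Rightarrow> 'a) \<Rightarrow> bool" where
  "function_assignment S U \<longleftrightarrow>
     (\<forall>A. finite A \<and> A \<subseteq> S \<longrightarrow> (\<forall>x\<in>A. U A x \<in> A))"

definition regressive_values :: "(nat list \<Rightarrow> nat list) \<Rightarrow> nat list set \<Rightarrow> nat list set" where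
  "regressive_values F B = {y. \<exists>x\<in>B. F x = y \<and> maxc y < minc x}"

end

theory Submission imports Defs "HOL-Library.Ramsey" "HOL-Library.FuncSet" begin

text \<open>Colour each (k+1)-subset T of the naturals as follows: its top element fixes the finite set
  A(T) = {0..max T}^k, and for every order pattern rho in {0..<k}^k its k smallest elements spell
  out a point of A(T); the colour records, for each rho, the value of U(A(T)) at that point if it is
  regressive. A regressive value lies in {0..<min T}^k, so only finitely many colours share a given
  minimum, and iterating the infinite Ramsey theorem (always splitting off the least remaining
  element) yields an infinite set Y on which the colour depends only on min T. Let E consist of the
  first p elements of Y and A = A(T) for any T whose top is the (p+k)-th element of Y. Padding a
  point x in E^k with elements of Y above E shows that a regressive value of U(A) at x only depends
  on min x and the order pattern of x, and there are at most p * k^k such pairs.\<close>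

lemma Ramsey_finite_colours:
  fixes f :: "'a set \<Rightarrow> 'b"
  assumes "infinite Z" "finite C" "f ` [Z]\<^bsup>r\<^esup> \<subseteq> C"
  obtains Y c where "Y \<subseteq> Z" "infinite Y" "f ` [Y]\<^bsup>r\<^esup> \<subseteq> {c}"
proof -
  obtain h where h: "bij_betw h C {..<card C}"
    using assms(2) ex_bij_betw_finite_nat by (metis atLeast0LessThan)
  have "(h \<circ> f) ` [Z]\<^bsup>r\<^esup> \<subseteq> {..<card C}"
    using assms(3) h by (auto simp: bij_betw_def)
  then obtain Y t
    where Y: "Y \<subseteq> Z" "infinite Y" "(h \<circ> f) ` [Y]\<^bsup>r\<^esup> \<subseteq> {t}"
    using Ramsey_nsets[OF assms(1)] by metis
  have "f ` [Y]\<^bsup>r\<^esup> \<subseteq> {inv_into C h t}"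
  proof clarify
    fix T assume T: "T \<in> [Y]\<^bsup>r\<^esup>"
    then have "f T \<in> C"
      using assms(3) nsets_mono[OF Y(1)] by auto
    moreover have "h (f T) = t"
      using Y(3) T by auto
    ultimately show "f T = inv_into C h t"
      using bij_betw_inv_into_left[OF h] by metis
  qed
  with Y(1,2) show thesis by (rule that)
qed

definition min_homogeneous :: "(nat set \<Rightarrow> 'b) \<Rightarrow> nat \<Rightarrow> nat set \<Rightarrow> bool" where
  "min_homogeneous f r Y \<longleftrightarrow> (\<forall>T\<in>[Y]\<^bsup>r\<^esup>. \<forall>T'\<in>[Y]\<^bsup>r\<^esup>. Min T = Min T' \<longrightarrow> f T = f T')"

lemma min_homogeneousD:
  "min_homogeneous f r Y \<Longrightarrow> T \<in> [Y]\<^bsup>r\<^esup> \<Longrightarrow> T' \<in> [Y]\<^bsup>r\<^esup> \<Longrightarrow> Min T = Min T' \<Longrightarrow>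
    f T = f T'"
  unfolding min_homogeneous_def by blast

lemma Ramsey_min_homogeneous_step:
  fixes f :: "nat set \<Rightarrow> 'b"
  assumes "infinite X" "\<And>T. T \<in> [X]\<^bsup>Suc r\<^esup> \<Longrightarrow> f T \<in> C (Min T)" "\<And>e. finite (C e)"
  obtains e X' c where "e \<in> X" "X' \<subseteq> X" "infinite X'" "\<forall>x\<in>X'. e < x"
    "\<forall>T\<in>[X']\<^bsup>r\<^esup>. f (insert e T) = c"
proof -
  define e where "e = (LEAST x. x \<in> X)"
  have e: "e \<in> X" "\<And>x. x \<in> X \<Longrightarrow> e \<le> x"
    unfolding e_def using assms(1) by (auto intro: LeastI Least_le dest: infinite_imp_nonempty)
  have "(\<lambda>T. f (insert e T)) ` [X - {e}]\<^bsup>r\<^esup> \<subseteq> C e"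
  proof clarify
    fix T assume T: "T \<in> [X - {e}]\<^bsup>r\<^esup>"
    then have "insert e T \<in> [X]\<^bsup>Suc r\<^esup>" and "Min (insert e T) = e"
      using e by (auto simp: nsets_def card_insert_if intro!: Min_eqI)
    then show "f (insert e T) \<in> C e"
      using assms(2) by metis
  qed
  then obtain X' c
    where "X' \<subseteq> X - {e}" "infinite X'" "(\<lambda>T. f (insert e T)) ` [X']\<^bsup>r\<^esup> \<subseteq> {c}"
    using Ramsey_finite_colours[OF _ assms(3)] assms(1) by (metis infinite_remove)
  moreover have "\<forall>x\<in>X'. e < x"
    using calculation(1) e(2) by force
  ultimately show thesis
    by (intro that[OF e(1), of X' c]) auto
qed

lemma obtain_nested_sequence:
  fixes P :: "'a \<Rightarrow> 'a set \<Rightarrow> bool"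
  assumes start: "P a0 X0"
    and extend: "\<And>a X. P a X \<Longrightarrow> \<exists>b Y. b \<in> X \<and> Y \<subseteq> X \<and> P b Y"
  obtains e :: "nat \<Rightarrow> 'a" and X :: "nat \<Rightarrow> 'a set"
  where "\<And>n. P (e n) (X n)" "\<And>n m. n < m \<Longrightarrow> e m \<in> X n"
proof -
  define R :: "(('a \<times> 'a set) \<times> 'a \<times> 'a set) set"
    where "R = {((a, X), (b, Y)). b \<in> X \<and> Y \<subseteq> X}"
  have "trans R"
    unfolding R_def trans_def by blast
  have "\<exists>y. case_prod P y \<and> (x, y) \<in> R" if Px: "case_prod P x" for x
  proof -
    obtain a X where x: "x = (a, X)"
      by fastforce
    then have "P a X"
      using Px by simp
    then obtain b Y where "b \<in> X" "Y \<subseteq> X" "P b Y"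
      using extend by blast
    then show ?thesis
      unfolding x R_def by (intro exI[of _ "(b, Y)"]) auto
  qed
  moreover have "case_prod P (a0, X0)"
    using start by simp
  ultimately obtain s :: "nat \<Rightarrow> 'a \<times> 'a set"
    where s: "\<And>n. case_prod P (s n)" "\<And>n m. n < m \<Longrightarrow> (s n, s m) \<in> R"
    using dependent_choice[of R "case_prod P" "(a0, X0)", OF \<open>trans R\<close>] by blast
  show thesis
  proof (rule that[of "fst \<circ> s" "snd \<circ> s"])
    show "P ((fst \<circ> s) n) ((snd \<circ> s) n)" for n
      using s(1)[of n] by (simp add: case_prod_beta)
    show "(fst \<circ> s) m \<in> (snd \<circ> s) n" if "n < m" for n m
      using s(2)[OF that] unfolding R_def by (auto simp: case_prod_beta)
  qed
qed

lemma Ramsey_min_homogeneous_sequence: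
  fixes f :: "nat set \<Rightarrow> 'b"
  assumes "infinite Z" "\<And>T. T \<in> [Z]\<^bsup>Suc r\<^esup> \<Longrightarrow> f T \<in> C (Min T)" "\<And>e. finite (C e)"
  obtains e :: "nat \<Rightarrow> nat" and X :: "nat \<Rightarrow> nat set" and c :: "nat \<Rightarrow> 'b"
  where "strict_mono e" "range e \<subseteq> Z" "\<And>n m. n < m \<Longrightarrow> e m \<in> X n"
    "\<And>n T. T \<in> [X n]\<^bsup>r\<^esup> \<Longrightarrow> f (insert (e n) T) = c n"
proof -
  define hom where "hom a X \<longleftrightarrow> a \<in> Z \<and> X \<subseteq> Z \<and> infinite X \<and> (\<forall>x\<in>X. a < x) \<and>
    (\<exists>c. \<forall>T\<in>[X]\<^bsup>r\<^esup>. f (insert a T) = c)" for a X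
  have step: "\<exists>a X'. a \<in> X \<and> X' \<subseteq> X \<and> hom a X'" if "infinite X" "X \<subseteq> Z" for X
  proof -
    have "f T \<in> C (Min T)" if "T \<in> [X]\<^bsup>Suc r\<^esup>" for T
      using assms(2) nsets_mono[OF \<open>X \<subseteq> Z\<close>] that by blast
    then obtain a X' c where "a \<in> X" "X' \<subseteq> X" "infinite X'" "\<forall>x\<in>X'. a < x"
      "\<forall>T\<in>[X']\<^bsup>r\<^esup>. f (insert a T) = c"
      using Ramsey_min_homogeneous_step[where f = f and C = C] \<open>infinite X\<close> assms(3) by blast
    moreover from this have "hom a X'"
      unfolding hom_def using \<open>X \<subseteq> Z\<close> by blast
    ultimately show ?thesis
      by blast
  qed
  obtain a0 X0 where "hom a0 X0"
    using step[OF assms(1)] by blast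
  moreover have "\<exists>b Y. b \<in> X \<and> Y \<subseteq> X \<and> hom b Y" if "hom a X" for a X
  proof (rule step)
    show "infinite X" "X \<subseteq> Z"
      using that unfolding hom_def by auto
  qed
  ultimately obtain e :: "nat \<Rightarrow> nat" and X :: "nat \<Rightarrow> nat set"
    where hom_n: "\<And>n. hom (e n) (X n)" and later: "\<And>n m. n < m \<Longrightarrow> e m \<in> X n"
    using obtain_nested_sequence[of hom a0 X0] by blast
  have mono: "strict_mono e"
    using later hom_n unfolding hom_def by (auto intro: strict_monoI)
  have range: "range e \<subseteq> Z"
    using hom_n unfolding hom_def by blast
  have "\<forall>n. \<exists>c. \<forall>T\<in>[X n]\<^bsup>r\<^esup>. f (insert (e n) T) = c"
    using hom_n unfolding hom_def by blast
  then obtain c where "\<forall>n. \<forall>T\<in>[X n]\<^bsup>r\<^esup>. f (insert (e n) T) = c n"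
    by (rule choice[THEN exE])
  then show thesis
    using that[of e X c] mono range later by blast
qed

lemma Ramsey_min_homogeneous:
  fixes f :: "nat set \<Rightarrow> 'b"
  assumes "infinite Z" "\<And>T. T \<in> [Z]\<^bsup>Suc r\<^esup> \<Longrightarrow> f T \<in> C (Min T)" "\<And>e. finite (C e)"
  obtains e :: "nat \<Rightarrow> nat"
  where "strict_mono e" "range e \<subseteq> Z" "min_homogeneous f (Suc r) (range e)"
proof -
  obtain e :: "nat \<Rightarrow> nat" and X :: "nat \<Rightarrow> nat set" and c :: "nat \<Rightarrow> 'b"
    where mono: "strict_mono e" and range: "range e \<subseteq> Z"
      and later: "\<And>n m. n < m \<Longrightarrow> e m \<in> X n"
      and c: "\<And>n T. T \<in> [X n]\<^bsup>r\<^esup> \<Longrightarrow> f (insert (e n) T) = c n"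
    using Ramsey_min_homogeneous_sequence[where f = f and C = C, OF assms] by blast
  have colour_at_min: "f T = c n"
    if T: "T \<in> [range e]\<^bsup>Suc r\<^esup>" and min: "Min T = e n" for T n
  proof -
    have fin: "finite T" "T \<noteq> {}"
      using T by (auto simp: nsets_def)
    have en: "e n \<in> T"
      using Min_in[OF fin] min by simp
    have "T - {e n} \<subseteq> X n"
    proof
      fix t assume t: "t \<in> T - {e n}"
      then obtain m where m: "t = e m"
        using T by (auto simp: nsets_def)
      have "e n < e m"
        using t m Min_le[OF fin(1), of t] min by auto
      then show "t \<in> X n"
        using later m mono by (simp add: strict_mono_less)
    qed
    then have "T - {e n} \<in> [X n]\<^bsup>r\<^esup>"
      using T en by (simp add: nsets_def)
    then show ?thesis
      using c en by (metis insert_Diff)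
  qed
  have "min_homogeneous f (Suc r) (range e)"
    unfolding min_homogeneous_def
  proof (intro ballI impI)
    fix T T'
    assume T: "T \<in> [range e]\<^bsup>Suc r\<^esup>" "T' \<in> [range e]\<^bsup>Suc r\<^esup>" and "Min T = Min T'"
    moreover have "finite T" "T \<noteq> {}" "T \<subseteq> range e"
      using T(1) by (auto simp: nsets_def)
    then have "Min T \<in> range e"
      using Min_in by blast
    then obtain n where "Min T = e n"
      by blast
    ultimately show "f T = f T'"
      using colour_at_min by metis
  qed
  then show thesis
    using that mono range by blast
qed

lemma sorted_list_of_set_nth_card_less:
  fixes S :: "'a::linorder set"
  assumes "finite S" "v \<in> S"
  shows "sorted_list_of_set S ! card {u \<in> S. u < v} = v"
proof -
  let ?xs = "sorted_list_of_set S"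
  have sorted: "sorted_wrt (<) ?xs" and set_xs: "set ?xs = S"
    using assms(1) by simp_all
  have "v \<in> set ?xs"
    using assms(2) set_xs by simp
  then obtain i where i: "i < length ?xs" "?xs ! i = v"
    unfolding in_set_conv_nth by blast
  have "{u \<in> S. u < v} = (!) ?xs ` {..<i}"
  proof (intro antisym subsetI)
    fix u assume u: "u \<in> {u \<in> S. u < v}"
    then have "u \<in> set ?xs"
      using set_xs by simp
    then obtain j where j: "j < length ?xs" "?xs ! j = u"
      unfolding in_set_conv_nth by blast
    have "u < v"
      using u by simp
    have "\<not> i < j"
      using sorted_wrt_nth_less[OF sorted, of i j] i j \<open>u < v\<close> by auto
    then have "j < i"
      using i j \<open>u < v\<close> by (cases "i = j") auto
    then show "u \<in> (!) ?xs ` {..<i}"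
      using j(2) by blast
  next
    fix u assume "u \<in> (!) ?xs ` {..<i}"
    then obtain j where j: "j < i" "u = ?xs ! j"
      by blast
    then have "u < v"
      using sorted_wrt_nth_less[OF sorted, of j i] i by simp
    moreover have "u \<in> set ?xs"
      using j i(1) by simp
    ultimately show "u \<in> {u \<in> S. u < v}"
      using set_xs by simp
  qed
  moreover have "inj_on ((!) ?xs) {..<i}"
    using i(1) by (intro inj_on_nth) auto
  ultimately show ?thesis
    using i by (simp add: card_image)
qed

definition order_pattern :: "nat list \<Rightarrow> nat list" where
  "order_pattern x = map (\<lambda>v. card {u \<in> set x. u < v}) x"

definition pattern_instance :: "nat list \<Rightarrow> nat set \<Rightarrow> nat list" where
  "pattern_instance \<rho> T = map ((!) (sorted_list_of_set T)) \<rho>"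

lemma order_pattern_in_cube: "order_pattern x \<in> cube {..<length x} (length x)"
proof -
  have "card {u \<in> set x. u < v} < card (set x)" if "v \<in> set x" for v
    using that by (intro psubset_card_mono) auto
  then show ?thesis
    using card_length[of x] unfolding order_pattern_def cube_def by fastforce
qed

lemma pattern_instance_order_pattern:
  assumes "finite T" "set x \<subseteq> T"
    and "\<And>u v. u \<in> T \<Longrightarrow> v \<in> set x \<Longrightarrow> u < v \<Longrightarrow> u \<in> set x"
  shows "pattern_instance (order_pattern x) T = x"
proof -
  have "{u \<in> set x. u < v} = {u \<in> T. u < v}" if "v \<in> set x" for v
    using assms(2,3) that by blast
  then show ?thesis
    unfolding pattern_instance_def order_pattern_def
    using assms(1,2) by (auto intro!: map_idI sorted_list_of_set_nth_card_less)
qed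

lemma set_pattern_instance_subset:
  assumes "finite T" "set \<rho> \<subseteq> {..<card T}"
  shows "set (pattern_instance \<rho> T) \<subseteq> T"
proof -
  have "sorted_list_of_set T ! i \<in> T" if "i < card T" for i
    using nth_mem[of i "sorted_list_of_set T"] that assms(1) by simp
  then show ?thesis
    using assms(2) unfolding pattern_instance_def by auto
qed

lemma finite_cube: "finite E \<Longrightarrow> finite (cube E k)"
  unfolding cube_def using finite_lists_length_eq[of E k] by (simp add: conj_commute)

lemma card_cube: "finite E \<Longrightarrow> card (cube E k) = card E ^ k"
  unfolding cube_def using card_lists_length_eq[of E k] by (simp add: conj_commute)

definition regressive_colour :: "(nat list set \<Rightarrow> nat list \<Rightarrow> nat list) \<Rightarrow> nat \<Rightarrow> nat set \<Rightarrow>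
    nat list \<Rightarrow> nat list option" where
  "regressive_colour U k T = restrict (\<lambda>\<rho>.
     let y = U (cube {..Max T} k) (pattern_instance \<rho> T) in if maxc y < Min T then Some y else None)
     (cube {..<k} k)"

lemma regressive_colour_in_PiE:
  assumes U: "function_assignment (Nk k) U" and T: "finite T" "card T = Suc k"
  shows "regressive_colour U k T \<in>
    cube {..<k} k \<rightarrow>\<^sub>E insert None (Some ` cube {..<Min T} k)"
proof -
  let ?A = "cube {..Max T} k"
  have "U ?A (pattern_instance \<rho> T) \<in> ?A" if "\<rho> \<in> cube {..<k} k" for \<rho>
  proof -
    have "set (pattern_instance \<rho> T) \<subseteq> T"
      using that T by (intro set_pattern_instance_subset) (auto simp: cube_def)
    moreover have "T \<subseteq> {..Max T}"
      using T(1) by auto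
    ultimately have "pattern_instance \<rho> T \<in> ?A"
      using that by (auto simp: cube_def pattern_instance_def)
    moreover have "finite ?A"
      by (simp add: finite_cube)
    moreover have "?A \<subseteq> Nk k"
      by (auto simp: cube_def Nk_def)
    ultimately show ?thesis
      using U unfolding function_assignment_def by blast
  qed
  moreover have "set y \<subseteq> {..<m}" if "maxc y < m" for y :: "nat list" and m
    using that unfolding maxc_def by (auto dest: Max_ge[rotated, of _ "set y"])
  ultimately show ?thesis
    unfolding regressive_colour_def Let_def by (auto simp: cube_def)
qed

lemma regressive_colour_order_pattern:
  assumes "length x = k" "pattern_instance (order_pattern x) T = x" "Min T = minc x"
  shows "regressive_colour U k T (order_pattern x) =
    (let y = U (cube {..Max T} k) x in if maxc y < minc x then Some y else None)"
proof -
  have "order_pattern x \<in> cube {..<k} k"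
    using order_pattern_in_cube[of x] assms(1) by simp
  then show ?thesis
    using assms(2,3) by (simp add: regressive_colour_def)
qed

lemma obtain_padding_above:
  assumes y: "strict_mono y" and x: "x \<in> cube (y ` {..<p}) k" and "k > 0"
  obtains T where "T \<in> [range y]\<^bsup>Suc k\<^esup>" "Min T = minc x" "Max T = y (p + k)"
    "pattern_instance (order_pattern x) T = x"
proof -
  let ?r = "card (set x)"
  let ?pad = "y ` {p + ?r..p + k}"
  define T where "T = set x \<union> ?pad"
  have len: "length x = k" and sx: "set x \<subseteq> y ` {..<p}"
    using x by (auto simp: cube_def)
  have ne: "set x \<noteq> {}"
    using len \<open>k > 0\<close> by auto
  have "?r \<le> k"
    using len card_length by metis
  have below: "u < w" if "u \<in> set x" "w \<in> ?pad" for u w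
    using that sx y by (auto simp: strict_mono_less)
  have "card ?pad = Suc k - ?r"
    using strict_mono_imp_inj_on[OF y] by (simp add: card_image inj_on_subset)
  then have card_T: "card T = Suc k"
    unfolding T_def using below \<open>?r \<le> k\<close> by (subst card_Un_disjoint) auto
  moreover have "T \<subseteq> range y" "finite T"
    unfolding T_def using sx by auto
  ultimately have "T \<in> [range y]\<^bsup>Suc k\<^esup>"
    by (simp add: nsets_def)
  moreover have "Min T = minc x"
  proof (rule Min_eqI[OF \<open>finite T\<close>])
    have min_x: "minc x \<in> set x"
      unfolding minc_def using ne by simp
    then show "minc x \<in> T"
      unfolding T_def by simp
    fix t assume "t \<in> T"
    then show "minc x \<le> t"
      unfolding T_def using below[OF min_x] by (auto simp: minc_def intro: less_imp_le)
  qed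
  moreover have "Max T = y (p + k)"
  proof (rule Max_eqI[OF \<open>finite T\<close>])
    have top: "y (p + k) \<in> ?pad"
      using \<open>?r \<le> k\<close> by simp
    then show "y (p + k) \<in> T"
      unfolding T_def by simp
    fix t assume "t \<in> T"
    then show "t \<le> y (p + k)"
      unfolding T_def using below[OF _ top] y by (auto simp: strict_mono_less_eq intro: less_imp_le)
  qed
  moreover have "pattern_instance (order_pattern x) T = x"
  proof (rule pattern_instance_order_pattern[OF \<open>finite T\<close>])
    show "set x \<subseteq> T"
      unfolding T_def by simp
    fix u v assume "u \<in> T" "v \<in> set x" "u < v"
    then show "u \<in> set x"
      unfolding T_def using below[of v u] by auto
  qed
  ultimately show thesis
    by (rule that)
qed

lemma card_image_le_if_factors:
  assumes "finite P" "\<phi> ` D \<subseteq> P"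
    and "\<And>x x'. x \<in> D \<Longrightarrow> x' \<in> D \<Longrightarrow> \<phi> x = \<phi> x' \<Longrightarrow> G x = G x'"
  shows "card (G ` D) \<le> card P"
proof (rule surj_card_le[OF assms(1)])
  define g where "g q = G (SOME x. x \<in> D \<and> \<phi> x = q)" for q
  show "G ` D \<subseteq> g ` P"
  proof clarify
    fix x assume x: "x \<in> D"
    let ?x' = "SOME x'. x' \<in> D \<and> \<phi> x' = \<phi> x"
    have "?x' \<in> D \<and> \<phi> ?x' = \<phi> x"
      by (rule someI) (use x in simp)
    then have "g (\<phi> x) = G x"
      unfolding g_def using assms(3) x by blast
    then show "G x \<in> g ` P"
      using assms(2) x by (metis image_eqI image_subset_iff)
  qed
qed

lemma card_regressive_values_le:
  assumes "finite E" "k > 0"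
    and "\<And>x x'. x \<in> cube E k \<Longrightarrow> x' \<in> cube E k \<Longrightarrow>
      maxc (F x) < minc x \<Longrightarrow> maxc (F x') < minc x' \<Longrightarrow>
      minc x = minc x' \<Longrightarrow> order_pattern x = order_pattern x' \<Longrightarrow> F x = F x'"
  shows "card (regressive_values F (cube E k)) \<le> k ^ k * card E"
proof -
  let ?D = "{x \<in> cube E k. maxc (F x) < minc x}"
  have regressive_eq: "regressive_values F (cube E k) = F ` ?D"
    unfolding regressive_values_def by auto
  have fin: "finite (cube {..<k} k \<times> E)"
    using assms(1) by (simp add: finite_cube)
  have factor: "(\<lambda>x. (order_pattern x, minc x)) ` ?D \<subseteq> cube {..<k} k \<times> E"
  proof (rule image_subsetI)
    fix x assume "x \<in> ?D"
    then have "length x = k" "set x \<subseteq> E" "set x \<noteq> {}"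
      using \<open>k > 0\<close> by (auto simp: cube_def)
    then show "(order_pattern x, minc x) \<in> cube {..<k} k \<times> E"
      using order_pattern_in_cube[of x] Min_in[of "set x"] by (auto simp: minc_def)
  qed
  have "card (F ` ?D) \<le> card (cube {..<k} k \<times> E)"
    by (rule card_image_le_if_factors[OF fin factor]) (use assms(3) in auto)
  then show ?thesis
    unfolding regressive_eq by (simp add: card_cartesian_product card_cube)
qed

lemma regressive_value_factors_through_pattern:
  assumes y: "strict_mono y"
    and hom: "min_homogeneous (regressive_colour U k) (Suc k) (range y)"
    and "k > 0" and A: "A = cube {..y (p + k)} k"
    and x: "x \<in> cube (y ` {..<p}) k" and x': "x' \<in> cube (y ` {..<p}) k"
    and regressive: "maxc (U A x) < minc x" "maxc (U A x') < minc x'"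
    and same: "minc x = minc x'" "order_pattern x = order_pattern x'"
  shows "U A x = U A x'"
proof -
  obtain T where T: "T \<in> [range y]\<^bsup>Suc k\<^esup>" "Min T = minc x" "Max T = y (p + k)"
    "pattern_instance (order_pattern x) T = x"
    using obtain_padding_above[OF y x \<open>k > 0\<close>] by blast
  obtain T' where T': "T' \<in> [range y]\<^bsup>Suc k\<^esup>" "Min T' = minc x'" "Max T' = y (p + k)"
    "pattern_instance (order_pattern x') T' = x'"
    using obtain_padding_above[OF y x' \<open>k > 0\<close>] by blast
  have "Some (U A x) = regressive_colour U k T (order_pattern x)"
    using regressive_colour_order_pattern[of x k T U] x regressive T A by (simp add: cube_def)
  also have "\<dots> = regressive_colour U k T' (order_pattern x')"
    using min_homogeneousD[OF hom T(1) T'(1)] T(2) T'(2) same by simp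
  also have "\<dots> = Some (U A x')"
    using regressive_colour_order_pattern[of x' k T' U] x' regressive T' A by (simp add: cube_def)
  finally show ?thesis
    by simp
qed

lemma card_regressive_values_homogeneous_le:
  assumes y: "strict_mono y"
    and hom: "min_homogeneous (regressive_colour U k) (Suc k) (range y)"
    and "k > 0"
  shows "card (regressive_values (U (cube {..y (p + k)} k)) (cube (y ` {..<p}) k)) \<le> k ^ k * p"
proof -
  let ?A = "cube {..y (p + k)} k"
  have "card (regressive_values (U ?A) (cube (y ` {..<p}) k)) \<le> k ^ k * card (y ` {..<p})"
  proof (rule card_regressive_values_le)
    show "\<And>x x'. x \<in> cube (y ` {..<p}) k \<Longrightarrow> x' \<in> cube (y ` {..<p}) k \<Longrightarrow>
      maxc (U ?A x) < minc x \<Longrightarrow> maxc (U ?A x') < minc x' \<Longrightarrow>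
      minc x = minc x' \<Longrightarrow> order_pattern x = order_pattern x' \<Longrightarrow> U ?A x = U ?A x'"
      by (rule regressive_value_factors_through_pattern[OF y hom \<open>k > 0\<close> refl])
  qed (simp_all add: \<open>k > 0\<close>)
  moreover have "card (y ` {..<p}) = p"
    using strict_mono_imp_inj_on[OF y] by (simp add: card_image inj_on_subset)
  ultimately show ?thesis
    by simp
qed

lemma regressive_colour_min_homogeneous:
  assumes "function_assignment (Nk k) U"
  obtains y :: "nat \<Rightarrow> nat"
  where "strict_mono y" "min_homogeneous (regressive_colour U k) (Suc k) (range y)"
proof -
  let ?C = "\<lambda>m. cube {..<k} k \<rightarrow>\<^sub>E insert None (Some ` cube {..<m} k)"
  have "regressive_colour U k T \<in> ?C (Min T)" if "T \<in> [UNIV]\<^bsup>Suc k\<^esup>" for T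
    using regressive_colour_in_PiE[OF assms] that by (simp add: nsets_def)
  moreover have "finite (?C m)" for m
    by (simp add: finite_PiE finite_cube)
  ultimately show thesis
    using that Ramsey_min_homogeneous[where C = ?C, OF infinite_UNIV_nat] by metis
qed

theorem theorem0p6:
  fixes k p :: nat and U :: "nat list set \<Rightarrow> nat list \<Rightarrow> nat list"
  assumes "k > 0" and "p > 0"
    and "function_assignment (Nk k) U"
  shows "\<exists>A E. finite A \<and> A \<subseteq> Nk k \<and> card E = p \<and> cube E k \<subseteq> A \<and>
           card (regressive_values (U A) (cube E k)) \<le> k ^ k * p"
proof -
  obtain y :: "nat \<Rightarrow> nat"
    where y: "strict_mono y" and hom: "min_homogeneous (regressive_colour U k) (Suc k) (range y)"
    using regressive_colour_min_homogeneous[OF assms(3)] by blast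
  define E where "E = y ` {..<p}"
  define A where "A = cube {..y (p + k)} k"
  show ?thesis
  proof (intro exI conjI)
    show "finite A"
      unfolding A_def by (simp add: finite_cube)
    show "A \<subseteq> Nk k"
      unfolding A_def by (auto simp: cube_def Nk_def)
    show "card E = p"
      unfolding E_def using strict_mono_imp_inj_on[OF y] by (simp add: card_image inj_on_subset)
    show "cube E k \<subseteq> A"
      unfolding E_def A_def cube_def using y by (auto simp: strict_mono_less_eq)
    show "card (regressive_values (U A) (cube E k)) \<le> k ^ k * p"
      unfolding A_def E_def using card_regressive_values_homogeneous_le[OF y hom \<open>k > 0\<close>] .
  qed
qed

end
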